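(* For $Z\in\mathfrak m_0$, the differential of $P:\mathfrak m_0\to\mathfrak m_0$, $P(Z)=\mathrm{ad}_\Upsilon\mathrm{Ad}_{\exp Z}\Upsilon$, at $Z$ is $dP_Z=S_{JZ}\circ E_Z:\mathfrak m_0\to\mathfrak m_0$, where $E_Z=\sum_{n\ge0}\frac{\mathrm{ad}_Z^{2n}}{(2n+1)!}$ and $S_{Y}=\sum_{n\ge0}\frac{\mathrm{ad}_{Y}^{2n}}{(2n)!}$.
   Context: Let $G$ be a simple complex algebraic group with commuting antiholomorphic involutions $\sigma,\theta$, $G_u=G^\theta$ maximal compact, $G_0=G^\sigma$, $K=G^{\sigma\theta}$, $K_0=K\cap G_0$. $\mathfrak g=\mathfrak k\oplus\mathfrak m$ is the $\pm1$-eigenspace decomposition of $\sigma\theta$, $\mathfrak k_0=\mathfrak k\cap\mathfrak g_0$, $\mathfrak m_0=\mathfrak m\cap\mathfrak g_0$. Assume $G_u/K_0$ is an irreducible Hermitian symmetric space of compact type; $\Upsilon$ is in the center of $\mathfrak k_0$ with $\mathrm{ad}_\Upsilon$ having eigenvalues $\pm i$ on $\mathfrak m$; $J=\mathrm{ad}_\Upsilon|_{\mathfrak m}$ (it preserves $\mathfrak m_0$, and $E_Z$, $S_{JZ}$ preserve $\mathfrak m_0$). *)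

theory Defs
  imports "HOL-Analysis.Analysis"
begin

text \<open>Lie algebra conventions: the bracket is a function br, ad_X = br X.
  Ad of exp X acting on Y is the exponential series of ad_X applied to Y.\<close>

definition Ad_exp :: "('a::real_normed_vector \<Rightarrow> 'a \<Rightarrow> 'a) \<Rightarrow> 'a \<Rightarrow> 'a \<Rightarrow> 'a" where
  "Ad_exp br X Y = (\<Sum>n. ((br X) ^^ n) Y /\<^sub>R fact n)"

definition E_op :: "('a::real_normed_vector \<Rightarrow> 'a \<Rightarrow> 'a) \<Rightarrow> 'a \<Rightarrow> 'a \<Rightarrow> 'a" where
  "E_op br Z W = (\<Sum>n. ((br Z) ^^ (2*n)) W /\<^sub>R fact (2*n+1))"

definition S_op :: "('a::real_normed_vector \<Rightarrow> 'a \<Rightarrow> 'a) \<Rightarrow> 'a \<Rightarrow> 'a \<Rightarrow> 'a" where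
  "S_op br Y W = (\<Sum>n. ((br Y) ^^ (2*n)) W /\<^sub>R fact (2*n))"

end

theory Submission
  imports Defs
begin

(*
  The exponential series of Ad_exp br X Upsilon is differentiated term by term: on a ball
  around Z the derivatives are dominated by a convergent exponential series. By a Leibniz
  rule, the derivative of ad_X^n Upsilon in direction W is a signed binomial combination of the
  vectors ad_X^(n-1-l) [Upsilon, ad_X^l W]. For X, W in m0 the map ad_X interchanges m0 and k0,
  and J = ad_Upsilon kills k0, so after applying J only the terms with n odd and l even
  survive. On m0 one has ad_(JX)^(2k) = - J ad_X^(2k) J, which turns the surviving terms into
  ad_(JZ)^(2a) ad_Z^(2b) W / ((2a)! (2b+1)!): the derivative series is the Cauchy product of
  the series defining S_(JZ) and E_Z.
*)

lemma convolution_tendsto_zero: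
  fixes t r :: "nat \<Rightarrow> real"
  assumes "summable t" "\<And>i. 0 \<le> t i" "r \<longlonglongrightarrow> 0"
  shows "(\<lambda>n. \<Sum>i<n. t i * r (n - i)) \<longlonglongrightarrow> 0"
proof -
  obtain B where B: "\<And>m. norm (r m) \<le> B"
    using convergent_imp_Bseq[OF convergentI[OF assms(3)]] by (auto simp: Bseq_def)
  define a where "a i n = (if i < n then t i * r (n - i) else 0)" for i n
  have "(\<lambda>n. a i n) \<longlonglongrightarrow> 0" for i
  proof -
    have "(\<lambda>n. t i * r (n - i)) \<longlonglongrightarrow> 0"
      using tendsto_mult_right_zero[OF filterlim_compose[OF assms(3) filterlim_minus_const_nat_at_top]] .
    moreover have "\<forall>\<^sub>F n in sequentially. t i * r (n - i) = a i n"
      using eventually_gt_at_top[of i] by eventually_elim (simp add: a_def)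
    ultimately show ?thesis by (rule Lim_transform_eventually)
  qed
  moreover have "norm (a i n) \<le> t i * B" for i n
    using B[of "n - i"] assms(2)[of i]
    by (auto simp: a_def abs_mult intro: mult_left_mono order_trans[OF _ B])
  ultimately have "(\<lambda>n. \<Sum>i. a i n) \<longlonglongrightarrow> (\<Sum>i. 0::real)"
    using assms(1)
    by (intro tannerys_theorem[where M="\<lambda>i. t i * B", THEN conjunct2, THEN conjunct2])
      (auto intro: always_eventually summable_mult2)
  moreover have "(\<Sum>i. a i n) = (\<Sum>i<n. t i * r (n - i))" for n
    unfolding a_def by (subst suminf_finite[of "{..<n}"]) auto
  ultimately show ?thesis by simp
qed

lemma sum_Cauchy_product_linear:
  fixes n :: nat
  assumes "\<And>i. linear (T i)"
  shows "(\<Sum>k<n. \<Sum>i\<le>k. T i (v (k - i))) = (\<Sum>i<n. T i (\<Sum>j<n - i. v j))"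
proof (induction n)
  case (Suc n)
  have "(\<Sum>i<Suc n. T i (\<Sum>j<Suc n - i. v j)) =
      (\<Sum>i<Suc n. T i (\<Sum>j<n - i. v j) + T i (v (n - i)))"
    by (intro sum.cong refl) (simp add: Suc_diff_le linear_add[OF assms, symmetric])
  also have "\<dots> = (\<Sum>i<n. T i (\<Sum>j<n - i. v j)) + (\<Sum>i\<le>n. T i (v (n - i)))"
    by (simp add: sum.distrib linear_0[OF assms] lessThan_Suc_atMost[symmetric])
  finally show ?case using Suc by simp
qed simp

(* Mertens' theorem: absolute convergence is needed on the side of the operators only. *)
lemma Cauchy_product_sums_linear:
  fixes T :: "nat \<Rightarrow> 'a::real_normed_vector \<Rightarrow> 'b::banach"
  assumes lin: "\<And>i. linear (T i)" and bound: "\<And>i x. norm (T i x) \<le> t i * norm x"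
    and "\<And>i. 0 \<le> t i" "summable t" and v: "v sums V"
  shows "(\<lambda>k. \<Sum>i\<le>k. T i (v (k - i))) sums (\<Sum>i. T i V)"
proof -
  define r where "r m = V - (\<Sum>j<m. v j)" for m
  have r: "(\<lambda>m. norm (r m)) \<longlonglongrightarrow> 0"
    using tendsto_diff[OF tendsto_const[of V] v[unfolded sums_def]] unfolding r_def
    by (simp add: tendsto_norm_zero)
  have "summable (\<lambda>i. T i V)"
    by (rule summable_comparison_test'[where N=0 and g="\<lambda>i. t i * norm V"])
      (use assms(4) bound in \<open>auto intro: summable_mult2\<close>)
  then have TV: "(\<lambda>n. \<Sum>i<n. T i V) \<longlonglongrightarrow> (\<Sum>i. T i V)"
    by (rule summable_LIMSEQ)
  have "(\<lambda>n. \<Sum>i<n. T i (r (n - i))) \<longlonglongrightarrow> 0"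
  proof (rule tendsto_0_le[where K=1])
    show "(\<lambda>n. \<Sum>i<n. t i * norm (r (n - i))) \<longlonglongrightarrow> 0"
      using convolution_tendsto_zero[OF assms(4,3) r] .
    show "\<forall>\<^sub>F n in sequentially.
        norm (\<Sum>i<n. T i (r (n - i))) \<le> norm (\<Sum>i<n. t i * norm (r (n - i))) * 1"
      by (intro always_eventually allI order_trans[OF norm_sum])
        (auto intro: sum_mono bound simp: assms(3) sum_nonneg)
  qed
  with TV have "(\<lambda>n. (\<Sum>i<n. T i V) - (\<Sum>i<n. T i (r (n - i)))) \<longlonglongrightarrow> (\<Sum>i. T i V)"
    using tendsto_diff by fastforce
  moreover have "(\<Sum>i<n. T i V) - (\<Sum>i<n. T i (r (n - i))) = (\<Sum>k<n. \<Sum>i\<le>k. T i (v (k - i)))"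
    for n
    unfolding sum_Cauchy_product_linear[OF lin, where n=n and v=v] r_def
    by (simp add: linear_diff[OF lin] sum_subtractf)
  ultimately show ?thesis unfolding sums_def by simp
qed

lemma uniformly_dominated_series_tail:
  fixes f' :: "nat \<Rightarrow> 'a \<Rightarrow> 'b::real_normed_vector \<Rightarrow> 'c::banach"
  assumes bound: "\<And>n y h. y \<in> S \<Longrightarrow> norm (f' n y h) \<le> M n * norm h"
    and M: "summable M" and e: "e > 0"
  shows "\<forall>\<^sub>F n in sequentially. \<forall>y\<in>S. \<forall>h.
    norm ((\<Sum>i<n. f' i y h) - (\<Sum>i. f' i y h)) \<le> e * norm h"
proof -
  obtain N where N: "\<And>n. n \<ge> N \<Longrightarrow> norm (\<Sum>i. M (i + n)) < e"
    using suminf_exist_split[OF e M] by blast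
  have "norm ((\<Sum>i<n. f' i y h) - (\<Sum>i. f' i y h)) \<le> e * norm h" if "n \<ge> N" "y \<in> S" for n y h
  proof -
    have "summable (\<lambda>i. f' i y h)"
      by (rule summable_comparison_test'[where N=0 and g="\<lambda>i. M i * norm h"])
        (use bound[OF \<open>y \<in> S\<close>] M in \<open>auto intro: summable_mult2\<close>)
    then have "norm ((\<Sum>i<n. f' i y h) - (\<Sum>i. f' i y h)) = norm (\<Sum>i. f' (i + n) y h)"
      using suminf_minus_initial_segment[of "\<lambda>i. f' i y h" n] by (simp add: norm_minus_commute)
    also have "\<dots> \<le> (\<Sum>i. M (i + n) * norm h)"
      by (rule norm_suminf_le)
        (use bound[OF \<open>y \<in> S\<close>] M in \<open>auto intro: summable_mult2 simp: summable_iff_shift\<close>)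
    also have "\<dots> \<le> e * norm h"
      using N[OF \<open>n \<ge> N\<close>] M
      by (simp add: suminf_mult2[symmetric] summable_iff_shift mult_right_mono)
    finally show ?thesis .
  qed
  then show ?thesis
    unfolding eventually_sequentially by blast
qed

lemma has_derivative_suminf_dominated:
  fixes f :: "nat \<Rightarrow> 'a::real_normed_vector \<Rightarrow> 'b::banach"
  assumes S: "convex S" "open S" "x \<in> S"
    and f': "\<And>n y. y \<in> S \<Longrightarrow> (f n has_derivative f' n y) (at y)"
    and bound: "\<And>n y h. y \<in> S \<Longrightarrow> norm (f' n y h) \<le> M n * norm h"
    and M: "summable M"
    and f: "summable (\<lambda>n. f n x)"
  shows "((\<lambda>y. \<Sum>n. f n y) has_derivative (\<lambda>h. \<Sum>n. f' n x h)) (at x)"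
proof -
  have "\<exists>g. \<forall>y\<in>S. (\<lambda>n. f n y) sums g y \<and>
      (g has_derivative (\<lambda>h. \<Sum>n. f' n y h)) (at y within S)"
  proof (rule has_derivative_series[where f=f and f'=f' and g'="\<lambda>y h. \<Sum>n. f' n y h"])
    show "(f n has_derivative f' n y) (at y within S)" if "y \<in> S" for n y
      using f'[OF that] by (rule has_derivative_at_withinI)
  qed (use S uniformly_dominated_series_tail[OF bound M] summable_sums[OF f] in auto)
  then obtain g where
    g: "\<And>y. y \<in> S \<Longrightarrow>
      (\<lambda>n. f n y) sums g y \<and> (g has_derivative (\<lambda>h. \<Sum>n. f' n y h)) (at y within S)"
    by blast
  have "(g has_derivative (\<lambda>h. \<Sum>n. f' n x h)) (at x)"
    using g[OF S(3)] at_within_open[OF S(3,2)] by simp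
  then show ?thesis
    by (rule has_derivative_transform_within_open[OF _ S(2,3)]) (use g sums_unique in metis)
qed

lemma has_derivative_within_eq_rhs_on:
  assumes "(f has_derivative f') (at x within S)" "bounded_linear g'"
    and "\<And>y. y \<in> S \<Longrightarrow> f' (y - x) = g' (y - x)"
  shows "(f has_derivative g') (at x within S)"
proof -
  have "\<forall>\<^sub>F y in at x within S. (1 / norm (y - x)) *\<^sub>R (f y - (f x + f' (y - x))) =
      (1 / norm (y - x)) *\<^sub>R (f y - (f x + g' (y - x)))"
    using assms(3) by (auto intro: eventually_at_filter[THEN iffD2] always_eventually)
  moreover have "((\<lambda>y. (1 / norm (y - x)) *\<^sub>R (f y - (f x + f' (y - x)))) \<longlongrightarrow> 0) (at x within S)"
    using assms(1) unfolding has_derivative_within by blast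
  ultimately have "((\<lambda>y. (1 / norm (y - x)) *\<^sub>R (f y - (f x + g' (y - x)))) \<longlongrightarrow> 0) (at x within S)"
    by (rule tendsto_cong[THEN iffD1])
  then show ?thesis
    using assms(2) unfolding has_derivative_within by blast
qed

lemma linear_suminf:
  fixes L :: "nat \<Rightarrow> 'a::real_vector \<Rightarrow> 'b::real_normed_vector"
  assumes "\<And>n. linear (L n)" "\<And>x. summable (\<lambda>n. L n x)"
  shows "linear (\<lambda>x. \<Sum>n. L n x)"
proof (rule linearI)
  show "(\<Sum>n. L n (x + y)) = (\<Sum>n. L n x) + (\<Sum>n. L n y)" for x y
    using suminf_add[OF assms(2)[of x] assms(2)[of y]] linear_add[OF assms(1)] by simp
  show "(\<Sum>n. L n (c *\<^sub>R x)) = c *\<^sub>R (\<Sum>n. L n x)" for c x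
    using assms by (simp add: linear_scale suminf_scaleR_right)
qed

lemma summable_power_even_fact:
  fixes y :: real
  shows "summable (\<lambda>n. y ^ (2 * n) / fact (2 * n + k))"
proof (rule summable_comparison_test'[where N=0])
  show "summable (\<lambda>n. (y\<^sup>2) ^ n / fact n)"
    using summable_exp_generic[of "y\<^sup>2"] by (simp add: divide_inverse_commute)
  have "fact n \<le> (fact (2 * n + k) :: real)" for n
    by (intro fact_mono) simp
  then show "norm (y ^ (2 * n) / fact (2 * n + k)) \<le> (y\<^sup>2) ^ n / fact n" for n
    by (simp add: power_mult divide_left_mono)
qed

lemma summable_power_pred_fact:
  fixes y :: real
  shows "summable (\<lambda>n. y ^ (n - 1) / fact (n - 1))"
  using summable_exp_generic[of y]
  by (subst summable_Suc_iff[symmetric]) (simp add: divide_inverse_commute)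

lemma sum_atMost_even_terms:
  fixes f :: "nat \<Rightarrow> 'a::comm_monoid_add"
  assumes "\<And>l. odd l \<Longrightarrow> f l = 0"
  shows "(\<Sum>l\<le>2 * m. f l) = (\<Sum>c\<le>m. f (2 * c))"
proof -
  have "(\<Sum>l\<le>2 * m. f l) = (\<Sum>l\<le>Suc (2 * m). f l)"
    using assms by simp
  also have "\<dots> = (\<Sum>c\<le>m. f (2 * c) + f (Suc (2 * c)))"
    by (rule sum.in_pairs_0)
  finally show ?thesis
    using assms by simp
qed

definition signed_binomial :: "nat \<Rightarrow> nat \<Rightarrow> real" where
  "signed_binomial n l = (-1) ^ l * real (n choose l)"

lemma signed_binomial_0 [simp]: "signed_binomial n 0 = 1"
  by (simp add: signed_binomial_def)

lemma signed_binomial_eq_0 [simp]: "n < l \<Longrightarrow> signed_binomial n l = 0"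
  by (simp add: signed_binomial_def)

lemma signed_binomial_Suc_Suc:
  "signed_binomial (Suc n) (Suc l) = signed_binomial n (Suc l) - signed_binomial n l"
  by (simp add: signed_binomial_def algebra_simps)

locale lie_algebra =
  fixes br :: "'a::euclidean_space \<Rightarrow> 'a \<Rightarrow> 'a"
  assumes bracket_bilinear: "bilinear br"
    and bracket_antisym: "\<And>x y. br x y = - br y x"
    and jacobi: "\<And>x y z. br x (br y z) + br y (br z x) + br z (br x y) = 0"
begin

sublocale bracket: bounded_bilinear br
  using bracket_bilinear bilinear_conv_bounded_bilinear by blast

lemma bracket_derivation: "br x (br y z) = br (br x y) z + br y (br x z)"
proof -
  have "br x (br y z) = - br y (br z x) - br z (br x y)"
    using jacobi[of x y z] by (simp add: algebra_simps eq_neg_iff_add_eq_0)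
  also have "br y (br z x) = - br y (br x z)"
    by (metis bracket_antisym bracket.minus_right)
  also have "br z (br x y) = - br (br x y) z"
    by (rule bracket_antisym)
  finally show ?thesis
    by simp
qed

lemma linear_ad_power: "linear (br X ^^ n)"
proof (induction n)
  case (Suc n)
  then show ?case
    using linear_compose[OF Suc bounded_linear.linear[OF bracket.bounded_linear_right]]
    by (simp add: o_def)
qed (simp add: linear_id[unfolded id_def])

lemmas ad_power_add = linear_add[OF linear_ad_power]
  and ad_power_scaleR = linear_scale[OF linear_ad_power]
  and ad_power_minus = linear_neg[OF linear_ad_power]
  and ad_power_zero = linear_0[OF linear_ad_power]

lemma bracket_ad_power:
  "br V ((br X ^^ n) Y) = (\<Sum>l\<le>n. signed_binomial n l *\<^sub>R (br X ^^ (n - l)) (br ((br X ^^ l) V) Y))"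
proof (induction n arbitrary: V)
  case (Suc n)
  define t where "t l = (br X ^^ (Suc n - l)) (br ((br X ^^ l) V) Y)" for l
  have "br X (br V ((br X ^^ n) Y)) = (\<Sum>l\<le>n. signed_binomial n l *\<^sub>R t l)"
    unfolding Suc.IH bracket.sum_right bracket.scaleR_right t_def
    by (intro sum.cong refl) (simp add: Suc_diff_le)
  also have "\<dots> = t 0 + (\<Sum>l<n. signed_binomial n (Suc l) *\<^sub>R t (Suc l))"
    by (subst sum.atMost_shift) simp
  also have "\<dots> = t 0 + (\<Sum>l\<le>n. signed_binomial n (Suc l) *\<^sub>R t (Suc l))"
    by (simp add: lessThan_Suc_atMost[symmetric])
  finally have ad_X: "br X (br V ((br X ^^ n) Y)) = \<dots>" .
  have ad_ad_X: "br (br X V) ((br X ^^ n) Y) = (\<Sum>l\<le>n. signed_binomial n l *\<^sub>R t (Suc l))"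
    unfolding Suc.IH t_def by (intro sum.cong refl) (simp add: funpow_Suc_right del: funpow.simps)
  have "br V ((br X ^^ Suc n) Y) = br X (br V ((br X ^^ n) Y)) - br (br X V) ((br X ^^ n) Y)"
    using bracket_derivation[of X V "(br X ^^ n) Y"] by (simp add: algebra_simps)
  also have "\<dots> = t 0 + (\<Sum>l\<le>n. signed_binomial (Suc n) (Suc l) *\<^sub>R t (Suc l))"
    unfolding ad_X ad_ad_X signed_binomial_Suc_Suc by (simp add: scaleR_diff_left sum_subtractf)
  also have "\<dots> = (\<Sum>l\<le>Suc n. signed_binomial (Suc n) l *\<^sub>R t l)"
    by (subst sum.atMost_Suc_shift) simp
  finally show ?case
    unfolding t_def .
qed simp

primrec ad_power_deriv :: "'a \<Rightarrow> 'a \<Rightarrow> 'a \<Rightarrow> nat \<Rightarrow> 'a" where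
  "ad_power_deriv X W Y 0 = 0"
| "ad_power_deriv X W Y (Suc n) = br X (ad_power_deriv X W Y n) + br W ((br X ^^ n) Y)"

lemma has_derivative_ad_power:
  "((\<lambda>X. (br X ^^ n) Y) has_derivative (\<lambda>W. ad_power_deriv X W Y n)) (at X within S)"
proof (induction n)
  case (Suc n)
  show ?case
    using bracket.FDERIV[OF has_derivative_ident Suc] by simp
qed simp

(* Puts W innermost, where the parity of l decides whether ad_X^l W lies in m0 or in k0. *)
lemma ad_power_deriv_eq:
  "ad_power_deriv X W Y n =
    (\<Sum>l<n. signed_binomial n (Suc l) *\<^sub>R (br X ^^ (n - Suc l)) (br Y ((br X ^^ l) W)))"
proof (induction n)
  case (Suc n)
  define t where "t l = (br X ^^ (n - l)) (br Y ((br X ^^ l) W))" for l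
  have "br X (ad_power_deriv X W Y n) = (\<Sum>l<n. signed_binomial n (Suc l) *\<^sub>R t l)"
    unfolding Suc.IH bracket.sum_right bracket.scaleR_right t_def
    by (intro sum.cong refl) (metis Suc_diff_Suc comp_apply funpow.simps(2) lessThan_iff)
  also have "\<dots> = (\<Sum>l\<le>n. signed_binomial n (Suc l) *\<^sub>R t l)"
    by (simp add: lessThan_Suc_atMost[symmetric])
  finally have ad_X: "br X (ad_power_deriv X W Y n) = \<dots>" .
  have "br W ((br X ^^ n) Y) = (\<Sum>l\<le>n. signed_binomial n l *\<^sub>R (br X ^^ (n - l)) (br ((br X ^^ l) W) Y))"
    by (rule bracket_ad_power)
  also have "\<dots> = - (\<Sum>l\<le>n. signed_binomial n l *\<^sub>R t l)"
    unfolding t_def by (subst (1) bracket_antisym) (simp add: ad_power_minus sum_negf)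
  finally have ad_W: "br W ((br X ^^ n) Y) = \<dots>" .
  show ?case
    unfolding ad_power_deriv.simps ad_X ad_W signed_binomial_Suc_Suc t_def
    by (simp add: scaleR_diff_left sum_subtractf lessThan_Suc_atMost)
qed simp

definition bracket_bound :: real where
  "bracket_bound = (SOME K. 0 < K \<and> (\<forall>x y. norm (br x y) \<le> norm x * norm y * K))"

lemma bracket_bound_pos: "0 < bracket_bound"
  and norm_bracket_le: "norm (br x y) \<le> norm x * norm y * bracket_bound"
  using someI_ex[OF bracket.pos_bounded] unfolding bracket_bound_def by blast+

lemma norm_ad_power_le: "norm ((br X ^^ n) Y) \<le> (bracket_bound * norm X) ^ n * norm Y"
proof (induction n)
  case (Suc n)
  have "norm ((br X ^^ Suc n) Y) \<le> norm X * norm ((br X ^^ n) Y) * bracket_bound"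
    using norm_bracket_le by simp
  also have "\<dots> \<le> norm X * ((bracket_bound * norm X) ^ n * norm Y) * bracket_bound"
    using Suc bracket_bound_pos by (intro mult_right_mono mult_left_mono) auto
  finally show ?case
    by (simp add: algebra_simps)
qed simp

lemma norm_ad_power_div_le:
  "0 < c \<Longrightarrow> norm ((br X ^^ n) Y /\<^sub>R c) \<le> (bracket_bound * norm X) ^ n / c * norm Y"
  using divide_right_mono[OF norm_ad_power_le[where X=X and n=n and Y=Y], of c]
  by (simp add: divide_inverse_commute)

lemma norm_ad_power_deriv_le:
  "norm (ad_power_deriv X W Y (Suc n)) \<le>
    real (Suc n) * bracket_bound ^ Suc n * norm X ^ n * norm W * norm Y"
proof (induction n)
  case 0
  show ?case
    using norm_bracket_le[of W Y] by (simp add: bracket.zero_right algebra_simps)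
next
  case (Suc n)
  let ?K = bracket_bound
  have "norm (ad_power_deriv X W Y (Suc (Suc n))) \<le>
      norm X * norm (ad_power_deriv X W Y (Suc n)) * ?K + norm W * norm ((br X ^^ Suc n) Y) * ?K"
    unfolding ad_power_deriv.simps(2)[of X W Y "Suc n"]
    by (rule norm_triangle_le[OF add_mono[OF norm_bracket_le norm_bracket_le]])
  also have "\<dots> \<le> norm X * (real (Suc n) * ?K ^ Suc n * norm X ^ n * norm W * norm Y) * ?K +
      norm W * ((?K * norm X) ^ Suc n * norm Y) * ?K"
    using Suc norm_ad_power_le[where X=X and n="Suc n" and Y=Y] bracket_bound_pos
    by (intro add_mono mult_right_mono mult_left_mono) auto
  also have "\<dots> = real (Suc (Suc n)) * ?K ^ Suc (Suc n) * norm X ^ Suc n * norm W * norm Y"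
    by (simp add: algebra_simps power_mult_distrib)
  finally show ?case .
qed

lemma norm_ad_power_deriv_fact_le:
  assumes "norm X \<le> R"
  shows "norm (ad_power_deriv X W Y n /\<^sub>R fact n) \<le>
    (bracket_bound * R) ^ (n - 1) / fact (n - 1) * (bracket_bound * norm Y) * norm W"
proof (cases n)
  case 0
  then show ?thesis
    using assms bracket_bound_pos norm_ge_zero[of X] by simp
next
  case (Suc k)
  let ?K = bracket_bound
  have "norm (ad_power_deriv X W Y n /\<^sub>R fact n) = norm (ad_power_deriv X W Y (Suc k)) / fact (Suc k)"
    by (simp add: Suc divide_inverse_commute)
  also have "\<dots> \<le> real (Suc k) * ?K ^ Suc k * norm X ^ k * norm W * norm Y / fact (Suc k)"
    by (rule divide_right_mono[OF norm_ad_power_deriv_le]) simp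
  also have "\<dots> = (?K * norm X) ^ k / fact k * (?K * norm Y) * norm W"
    by (simp add: power_mult_distrib field_simps del: of_nat_Suc)
  also have "\<dots> \<le> (?K * R) ^ k / fact k * (?K * norm Y) * norm W"
    using assms bracket_bound_pos
    by (intro mult_right_mono divide_right_mono mult_left_mono power_mono) auto
  finally show ?thesis
    by (simp add: Suc)
qed

lemma summable_ad_power_deriv: "summable (\<lambda>n. ad_power_deriv X W Y n /\<^sub>R fact n)"
  by (rule summable_comparison_test'[OF _ norm_ad_power_deriv_fact_le[OF order_refl]])
    (intro summable_mult2 summable_power_pred_fact)

lemma summable_Ad_exp: "summable (\<lambda>n. (br X ^^ n) Y /\<^sub>R fact n)"
proof (rule summable_comparison_test'[where N=0])
  show "summable (\<lambda>n. (bracket_bound * norm X) ^ n / fact n * norm Y)"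
    using summable_exp_generic[of "bracket_bound * norm X"]
    by (intro summable_mult2) (simp add: divide_inverse_commute)
  show "norm ((br X ^^ n) Y /\<^sub>R fact n) \<le> (bracket_bound * norm X) ^ n / fact n * norm Y" for n
    by (rule norm_ad_power_div_le) simp
qed

lemma summable_ad_power_even: "summable (\<lambda>n. (br X ^^ (2 * n)) Y /\<^sub>R fact (2 * n + k))"
proof (rule summable_norm_cancel, rule summable_comparison_test'[where N=0])
  show "summable (\<lambda>n. (bracket_bound * norm X) ^ (2 * n) / fact (2 * n + k) * norm Y)"
    by (intro summable_mult2 summable_power_even_fact)
  show "norm (norm ((br X ^^ (2 * n)) Y /\<^sub>R fact (2 * n + k))) \<le>
      (bracket_bound * norm X) ^ (2 * n) / fact (2 * n + k) * norm Y" for n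
    using norm_ad_power_div_le[where c="fact (2 * n + k)" and X=X and n="2 * n" and Y=Y] by simp
qed

lemma linear_E_op: "linear (E_op br X)"
  unfolding E_op_def[abs_def]
  using summable_ad_power_even[where k=1]
  by (intro linear_suminf) (auto simp: ad_power_add ad_power_scaleR linearI scaleR_add_right)

lemma linear_S_op: "linear (S_op br X)"
  unfolding S_op_def[abs_def]
  using summable_ad_power_even[where k=0]
  by (intro linear_suminf) (auto simp: ad_power_add ad_power_scaleR linearI scaleR_add_right)

lemma has_derivative_Ad_exp:
  "((\<lambda>X. Ad_exp br X Y) has_derivative (\<lambda>W. \<Sum>n. ad_power_deriv X W Y n /\<^sub>R fact n)) (at X)"
  unfolding Ad_exp_def
proof (rule has_derivative_suminf_dominated)
  define R where "R = norm X + 1"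
  show "summable (\<lambda>n. (bracket_bound * R) ^ (n - 1) / fact (n - 1) * (bracket_bound * norm Y))"
    by (intro summable_mult2 summable_power_pred_fact)
  show "norm (ad_power_deriv X' W Y n /\<^sub>R fact n) \<le>
      (bracket_bound * R) ^ (n - 1) / fact (n - 1) * (bracket_bound * norm Y) * norm W"
    if "X' \<in> ball X 1" for n X' W
  proof (rule norm_ad_power_deriv_fact_le)
    show "norm X' \<le> R"
      using that norm_triangle_ineq2[of X' X] by (simp add: R_def dist_norm norm_minus_commute)
  qed
  show "((\<lambda>X. (br X ^^ n) Y /\<^sub>R fact n) has_derivative
      (\<lambda>W. ad_power_deriv X' W Y n /\<^sub>R fact n)) (at X')" for n X'
    by (rule has_derivative_scaleR_right[OF has_derivative_ad_power])
qed (auto intro: summable_Ad_exp)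

end

(* U is the element Upsilon of the paper, so br U restricts to J on m0. *)
locale hermitian_lie_algebra = lie_algebra br
  for br :: "'a::euclidean_space \<Rightarrow> 'a \<Rightarrow> 'a" +
  fixes k0 m0 :: "'a set" and U :: 'a
  assumes subspace_m0: "subspace m0"
    and bracket_k0_m0: "\<And>x y. x \<in> k0 \<Longrightarrow> y \<in> m0 \<Longrightarrow> br x y \<in> m0"
    and bracket_m0_m0: "\<And>x y. x \<in> m0 \<Longrightarrow> y \<in> m0 \<Longrightarrow> br x y \<in> k0"
    and U_k0: "U \<in> k0"
    and U_central: "\<And>x. x \<in> k0 \<Longrightarrow> br U x = 0"
    and J_squared: "\<And>x. x \<in> m0 \<Longrightarrow> br U (br U x) = - x"
begin

lemma bracket_m0_k0: "x \<in> m0 \<Longrightarrow> y \<in> k0 \<Longrightarrow> br x y \<in> m0"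
  using bracket_k0_m0[of y x] bracket_antisym[of x y] subspace_m0 by (simp add: subspace_neg)

lemma J_m0: "x \<in> m0 \<Longrightarrow> br U x \<in> m0"
  using bracket_k0_m0 U_k0 by blast

lemma ad_power_parity:
  assumes "X \<in> m0"
  shows "(V \<in> m0 \<longrightarrow> (br X ^^ n) V \<in> (if even n then m0 else k0)) \<and>
    (V \<in> k0 \<longrightarrow> (br X ^^ n) V \<in> (if even n then k0 else m0))"
  by (induction n) (auto simp: bracket_m0_m0[OF assms] bracket_m0_k0[OF assms])

lemma ad_power_m0_even: "X \<in> m0 \<Longrightarrow> V \<in> m0 \<Longrightarrow> even n \<Longrightarrow> (br X ^^ n) V \<in> m0"
  using ad_power_parity[of X V n] by simp

lemma ad_power_m0_odd: "X \<in> m0 \<Longrightarrow> V \<in> m0 \<Longrightarrow> odd n \<Longrightarrow> (br X ^^ n) V \<in> k0"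
  using ad_power_parity[of X V n] by simp

lemma bracket_J_left_m0: "X \<in> m0 \<Longrightarrow> Y \<in> m0 \<Longrightarrow> br (br U X) Y = - br X (br U Y)"
  using bracket_derivation[of U X Y] U_central[OF bracket_m0_m0[of X Y]]
  by (simp add: eq_neg_iff_add_eq_0)

lemma bracket_J_left_k0: "K \<in> k0 \<Longrightarrow> br (br U X) K = br U (br X K)"
  using bracket_derivation[of U X K] U_central[of K] by (simp add: bracket.zero_right)

lemma ad_J_power_even:
  assumes "X \<in> m0" "V \<in> m0"
  shows "(br (br U X) ^^ (2 * k)) V = - br U ((br X ^^ (2 * k)) (br U V))"
  using assms(2)
proof (induction k arbitrary: V)
  case 0
  then show ?case using J_squared by simp
next
  case (Suc k)
  let ?B = "br (br U X)"
  have XJV: "br X (br U V) \<in> k0" "br X (br X (br U V)) \<in> m0"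
    using assms(1) Suc.prems J_m0 bracket_m0_m0 bracket_m0_k0 by blast+
  have BBV: "?B (?B V) = - br U (br X (br X (br U V)))"
    using bracket_J_left_m0[OF assms(1) Suc.prems] bracket_J_left_k0[OF XJV(1)]
    by (simp add: bracket.minus_right)
  have "(?B ^^ (2 * Suc k)) V = (?B ^^ (2 * k)) (?B (?B V))"
    by (simp add: funpow_Suc_right del: funpow.simps)
  also have "\<dots> = - br U ((br X ^^ (2 * k)) (br U (?B (?B V))))"
    using Suc.IH BBV XJV(2) J_m0 subspace_m0 by (simp add: subspace_neg)
  also have "br U (?B (?B V)) = br X (br X (br U V))"
    using BBV J_squared[OF XJV(2)] by (simp add: bracket.minus_right)
  finally show ?case
    by (simp add: funpow_Suc_right del: funpow.simps)
qed

lemma J_ad_power_J_ad_power: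
  assumes "X \<in> m0" "W \<in> m0"
  shows "br U ((br X ^^ j) (br U ((br X ^^ l) W))) =
    (if even j \<and> even l then - (br (br U X) ^^ j) ((br X ^^ l) W) else 0)"
proof (cases "even l")
  case True
  then have J_ad_W: "br U ((br X ^^ l) W) \<in> m0"
    using assms ad_power_m0_even J_m0 by blast
  show ?thesis
  proof (cases "even j")
    case True
    then obtain k where "j = 2 * k" by blast
    then show ?thesis
      using ad_J_power_even[OF assms(1) ad_power_m0_even[OF assms \<open>even l\<close>], of k] \<open>even l\<close>
      by simp
  next
    case False
    then show ?thesis
      using U_central[OF ad_power_m0_odd[OF assms(1) J_ad_W]] by simp
  qed
next
  case False
  then show ?thesis
    using U_central[OF ad_power_m0_odd[OF assms False]] by (simp add: ad_power_zero bracket.zero_right)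
qed

lemma J_ad_power_deriv:
  assumes "X \<in> m0" "W \<in> m0"
  shows "br U (ad_power_deriv X W U n) = (\<Sum>l<n. signed_binomial n (Suc l) *\<^sub>R
    (if even (n - Suc l) \<and> even l then - (br (br U X) ^^ (n - Suc l)) ((br X ^^ l) W) else 0))"
  unfolding ad_power_deriv_eq bracket.sum_right bracket.scaleR_right J_ad_power_J_ad_power[OF assms] ..

lemma J_ad_power_deriv_even:
  assumes "X \<in> m0" "W \<in> m0"
  shows "br U (ad_power_deriv X W U (2 * m)) = 0"
  unfolding J_ad_power_deriv[OF assms] by (rule sum.neutral) auto

lemma J_ad_power_deriv_odd_binomial:
  assumes "X \<in> m0" "W \<in> m0"
  shows "br U (ad_power_deriv X W U (2 * m + 1)) = (\<Sum>c\<le>m.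
    real (2 * m + 1 choose (2 * c + 1)) *\<^sub>R (br (br U X) ^^ (2 * (m - c))) ((br X ^^ (2 * c)) W))"
proof -
  define f where "f l = signed_binomial (2 * m + 1) (Suc l) *\<^sub>R
    (if even (2 * m + 1 - Suc l) \<and> even l
     then - (br (br U X) ^^ (2 * m + 1 - Suc l)) ((br X ^^ l) W) else 0)" for l
  have "br U (ad_power_deriv X W U (2 * m + 1)) = (\<Sum>l\<le>2 * m. f l)"
    unfolding J_ad_power_deriv[OF assms] f_def by (simp add: lessThan_Suc_atMost)
  also have "\<dots> = (\<Sum>c\<le>m. f (2 * c))"
    by (rule sum_atMost_even_terms) (simp add: f_def)
  finally show ?thesis
    by (simp add: f_def signed_binomial_def right_diff_distrib' del: binomial_Suc_Suc)
qed

lemma J_ad_power_deriv_odd: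
  assumes "X \<in> m0" "W \<in> m0"
  shows "br U (ad_power_deriv X W U (2 * m + 1)) /\<^sub>R fact (2 * m + 1) = (\<Sum>a\<le>m.
    (br (br U X) ^^ (2 * a)) ((br X ^^ (2 * (m - a))) W) /\<^sub>R (fact (2 * a) * fact (2 * (m - a) + 1)))"
proof -
  let ?w = "\<lambda>c. (br (br U X) ^^ (2 * (m - c))) ((br X ^^ (2 * c)) W)"
  have "(real (2 * m + 1 choose (2 * c + 1)) *\<^sub>R ?w c) /\<^sub>R fact (2 * m + 1) =
      ?w c /\<^sub>R (fact (2 * (m - c)) * fact (2 * c + 1))" if "c \<le> m" for c
  proof -
    have "real (2 * m + 1 choose (2 * c + 1)) =
        fact (2 * m + 1) / (fact (2 * c + 1) * fact (2 * (m - c)))"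
      using binomial_fact[of "2 * c + 1" "2 * m + 1"] that by (simp add: right_diff_distrib')
    then show ?thesis
      by (simp add: mult.commute divide_inverse del: fact_Suc binomial_Suc_Suc)
  qed
  then have "br U (ad_power_deriv X W U (2 * m + 1)) /\<^sub>R fact (2 * m + 1) =
      (\<Sum>c\<le>m. ?w c /\<^sub>R (fact (2 * (m - c)) * fact (2 * c + 1)))"
    unfolding J_ad_power_deriv_odd_binomial[OF assms] scaleR_sum_right by (intro sum.cong) auto
  also have "\<dots> = (\<Sum>a\<le>m.
      (br (br U X) ^^ (2 * a)) ((br X ^^ (2 * (m - a))) W) /\<^sub>R (fact (2 * a) * fact (2 * (m - a) + 1)))"
    by (subst sum.atLeastAtMost_rev[of _ 0 m, unfolded atLeast0AtMost])
      (intro sum.cong refl, auto simp: mult.commute)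
  finally show ?thesis .
qed

lemma sums_J_ad_power_deriv:
  assumes Z: "Z \<in> m0" and W: "W \<in> m0"
  shows "(\<lambda>n. br U (ad_power_deriv Z W U n) /\<^sub>R fact n) sums S_op br (br U Z) (E_op br Z W)"
proof -
  let ?T = "\<lambda>a x. (br (br U Z) ^^ (2 * a)) x /\<^sub>R fact (2 * a)"
  let ?v = "\<lambda>b. (br Z ^^ (2 * b)) W /\<^sub>R fact (2 * b + 1)"
  have "(\<lambda>m. \<Sum>a\<le>m. ?T a (?v (m - a))) sums (\<Sum>a. ?T a (E_op br Z W))"
  proof (rule Cauchy_product_sums_linear)
    show "linear (?T a)" for a
      by (rule linearI) (simp_all add: ad_power_add ad_power_scaleR scaleR_add_right)
    show "norm (?T a x) \<le> (bracket_bound * norm (br U Z)) ^ (2 * a) / fact (2 * a) * norm x" for a x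
      by (rule norm_ad_power_div_le) simp
    show "summable (\<lambda>a. (bracket_bound * norm (br U Z)) ^ (2 * a) / fact (2 * a))"
      using summable_power_even_fact[where k=0] by simp
    show "?v sums E_op br Z W"
      unfolding E_op_def by (rule summable_sums[OF summable_ad_power_even])
  qed (use bracket_bound_pos in simp)
  then have odd_terms: "(\<lambda>m. br U (ad_power_deriv Z W U (2 * m + 1)) /\<^sub>R fact (2 * m + 1)) sums
      S_op br (br U Z) (E_op br Z W)"
    unfolding J_ad_power_deriv_odd[OF Z W] S_op_def by (simp add: ad_power_scaleR mult.commute)
  have "br U (ad_power_deriv Z W U n) /\<^sub>R fact n = 0" if "n \<notin> range (\<lambda>m. 2 * m + 1)" for n
  proof -
    have "even n"
      using that oddE by (metis rangeI)
    then show ?thesis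
      using J_ad_power_deriv_even[OF Z W] by (metis evenE scaleR_zero_right)
  qed
  moreover have "strict_mono (\<lambda>m::nat. 2 * m + 1)"
    by (rule strict_monoI) simp
  ultimately show ?thesis
    using sums_mono_reindex[where f="\<lambda>n. br U (ad_power_deriv Z W U n) /\<^sub>R fact n"] odd_terms
    by blast
qed

end

theorem lemma4p13:
  fixes br :: "'a::euclidean_space \<Rightarrow> 'a \<Rightarrow> 'a"
    and k0 m0 :: "'a set" and Ups Z :: 'a
  assumes bil: "bilinear br"
    and antisym: "\<And>x y. br x y = - br y x"
    and jacobi: "\<And>x y z. br x (br y z) + br y (br z x) + br z (br x y) = 0"
    and sub_k: "subspace k0" and sub_m: "subspace m0"
    and direct: "k0 \<inter> m0 = {0}" and span_all: "\<And>x. \<exists>a\<in>k0. \<exists>b\<in>m0. x = a + b"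
    and kk: "\<And>x y. x \<in> k0 \<Longrightarrow> y \<in> k0 \<Longrightarrow> br x y \<in> k0"
    and km: "\<And>x y. x \<in> k0 \<Longrightarrow> y \<in> m0 \<Longrightarrow> br x y \<in> m0"
    and mm: "\<And>x y. x \<in> m0 \<Longrightarrow> y \<in> m0 \<Longrightarrow> br x y \<in> k0"
    and Ups_k: "Ups \<in> k0"
    and Ups_central: "\<And>x. x \<in> k0 \<Longrightarrow> br Ups x = 0"
    and J_sq: "\<And>x. x \<in> m0 \<Longrightarrow> br Ups (br Ups x) = - x"
    and Z: "Z \<in> m0"
  shows "((\<lambda>X. br Ups (Ad_exp br X Ups))
           has_derivative (\<lambda>W. S_op br (br Ups Z) (E_op br Z W))) (at Z within m0)"
proof -
  interpret hermitian_lie_algebra br k0 m0 Ups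
    by unfold_locales (fact bil antisym jacobi sub_m km mm Ups_k Ups_central J_sq)+
  have "((\<lambda>X. Ad_exp br X Ups) has_derivative (\<lambda>W. \<Sum>n. ad_power_deriv Z W Ups n /\<^sub>R fact n))
      (at Z within m0)"
    using has_derivative_Ad_exp by (rule has_derivative_at_withinI)
  then have "((\<lambda>X. br Ups (Ad_exp br X Ups)) has_derivative
      (\<lambda>W. br Ups (\<Sum>n. ad_power_deriv Z W Ups n /\<^sub>R fact n))) (at Z within m0)"
    by (rule bounded_linear.has_derivative[OF bracket.bounded_linear_right])
  then show ?thesis
  proof (rule has_derivative_within_eq_rhs_on)
    show "bounded_linear (\<lambda>W. S_op br (br Ups Z) (E_op br Z W))"
      using linear_compose[OF linear_E_op linear_S_op] by (simp add: o_def linear_conv_bounded_linear)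
    fix y assume "y \<in> m0"
    then have "(\<lambda>n. br Ups (ad_power_deriv Z (y - Z) Ups n /\<^sub>R fact n)) sums
        S_op br (br Ups Z) (E_op br Z (y - Z))"
      using sums_J_ad_power_deriv[OF Z] Z sub_m by (simp add: subspace_diff bracket.scaleR_right)
    then show "br Ups (\<Sum>n. ad_power_deriv Z (y - Z) Ups n /\<^sub>R fact n) =
        S_op br (br Ups Z) (E_op br Z (y - Z))"
      using bounded_linear.suminf[OF bracket.bounded_linear_right summable_ad_power_deriv] sums_unique
      by metis
  qed
qed

end
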